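(* Let $D$ be a division semialgebra over $\mathbb{Z}_\mathrm{max}$ with finite unit index. Then $D$ is selective: for all $x,y\in D$, either $x+y=x$ or $x+y=y$.
   Context: A (possibly noncommutative) semiring has a commutative associative addition with identity $0$ and an associative multiplication with identity $1$, satisfying both distributive laws; a division semiring is one in which every nonzero element is invertible. $\mathbb{Z}_\mathrm{max}=\mathbb{Z}\cup\{-\infty\}$ is the semifield with addition $\max$ and multiplication ordinary addition. A division semialgebra over a semifield $K$ is a division semiring $D$ with an injective homomorphism from $K$ into the center of $D$. The unit index is $\mathrm{ui}(D/K)=|D^\times/K^\times|$. *)

theory Defs
  imports Main
begin

definition semiring_ax :: "('a \<Rightarrow> 'a \<Rightarrow> 'a) \<Rightarrow> ('a \<Rightarrow> 'a \<Rightarrow> 'a) \<Rightarrow> 'a \<Rightarrow> 'a \<Rightarrow> bool" where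
  "semiring_ax add mul z u \<longleftrightarrow>
     (\<forall>x y w. add (add x y) w = add x (add y w)) \<and>
     (\<forall>x y. add x y = add y x) \<and>
     (\<forall>x. add z x = x) \<and>
     (\<forall>x y w. mul (mul x y) w = mul x (mul y w)) \<and>
     (\<forall>x. mul u x = x \<and> mul x u = x) \<and>
     (\<forall>x y w. mul x (add y w) = add (mul x y) (mul x w)) \<and>
     (\<forall>x y w. mul (add x y) w = add (mul x w) (mul y w))"

definition units_of_sr :: "('a \<Rightarrow> 'a \<Rightarrow> 'a) \<Rightarrow> 'a \<Rightarrow> 'a set" where
  "units_of_sr mul u = {x. \<exists>y. mul x y = u \<and> mul y x = u}"

definition division_semiring :: "('a \<Rightarrow> 'a \<Rightarrow> 'a) \<Rightarrow> ('a \<Rightarrow> 'a \<Rightarrow> 'a) \<Rightarrow> 'a \<Rightarrow> 'a \<Rightarrow> bool" where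
  "division_semiring add mul z u \<longleftrightarrow> semiring_ax add mul z u \<and>
     (\<forall>x. x \<noteq> z \<longrightarrow> x \<in> units_of_sr mul u)"

datatype zmax = NegInf | Fin int

fun zmax_add :: "zmax \<Rightarrow> zmax \<Rightarrow> zmax" where
  "zmax_add NegInf y = y"
| "zmax_add x NegInf = x"
| "zmax_add (Fin a) (Fin b) = Fin (max a b)"

fun zmax_mul :: "zmax \<Rightarrow> zmax \<Rightarrow> zmax" where
  "zmax_mul (Fin a) (Fin b) = Fin (a + b)"
| "zmax_mul _ _ = NegInf"

definition zmax_zero :: zmax where "zmax_zero = NegInf"
definition zmax_one :: zmax where "zmax_one = Fin 0"

definition division_semialgebra_zmax ::
  "('a \<Rightarrow> 'a \<Rightarrow> 'a) \<Rightarrow> ('a \<Rightarrow> 'a \<Rightarrow> 'a) \<Rightarrow> 'a \<Rightarrow> 'a \<Rightarrow> (zmax \<Rightarrow> 'a) \<Rightarrow> bool" where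
  "division_semialgebra_zmax add mul z u phi \<longleftrightarrow>
     division_semiring add mul z u \<and>
     (\<forall>a b. phi (zmax_add a b) = add (phi a) (phi b)) \<and>
     (\<forall>a b. phi (zmax_mul a b) = mul (phi a) (phi b)) \<and>
     phi zmax_zero = z \<and> phi zmax_one = u \<and>
     inj phi \<and>
     (\<forall>a x. mul (phi a) x = mul x (phi a))"

text \<open>The quotient D^x / K^x, as the set of cosets x * phi(K^x), K^x = Z_max - {-\<infinity>}.\<close>
definition unit_cosets ::
  "('a \<Rightarrow> 'a \<Rightarrow> 'a) \<Rightarrow> 'a \<Rightarrow> (zmax \<Rightarrow> 'a) \<Rightarrow> 'a set set" where
  "unit_cosets mul u phi =
     (\<lambda>x. (\<lambda>k. mul x (phi k)) ` {k. k \<noteq> zmax_zero}) ` units_of_sr mul u"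

definition unit_index :: "('a \<Rightarrow> 'a \<Rightarrow> 'a) \<Rightarrow> 'a \<Rightarrow> (zmax \<Rightarrow> 'a) \<Rightarrow> nat" where
  "unit_index mul u phi = card (unit_cosets mul u phi)"

definition finite_unit_index :: "('a \<Rightarrow> 'a \<Rightarrow> 'a) \<Rightarrow> 'a \<Rightarrow> (zmax \<Rightarrow> 'a) \<Rightarrow> bool" where
  "finite_unit_index mul u phi \<longleftrightarrow> finite (unit_cosets mul u phi)"

definition selective :: "('a \<Rightarrow> 'a \<Rightarrow> 'a) \<Rightarrow> bool" where
  "selective add \<longleftrightarrow> (\<forall>x y. add x y = x \<or> add x y = y)"

end

theory Submission
  imports Defs
begin

text \<open>In an additively idempotent division semiring, a unit \<open>w\<close> with \<open>w\<^sup>m \<preceq> 1\<close> for some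
  \<open>m \<ge> 1\<close> satisfies \<open>w \<preceq> 1\<close>: with \<open>q = 1 + w\<close> one has \<open>q\<^sup>m = q\<^sup>m\<^sup>-\<^sup>1 + w\<^sup>m = q\<^sup>m\<^sup>-\<^sup>1\<close>, and cancelling
  the unit \<open>q\<^sup>m\<^sup>-\<^sup>1\<close> gives \<open>q = 1\<close>. By symmetry (pass to \<open>w\<inverse>\<close>) a unit is comparable with 1 as soon as
  one of its positive powers is. Finite unit index over \<open>\<int>\<^sub>m\<^sub>a\<^sub>x\<close> forces, by pigeonhole on the cosets
  of the powers of \<open>w\<close>, some \<open>w\<^sup>m\<close> into the totally ordered image of \<open>\<int>\<^sub>m\<^sub>a\<^sub>x\<close>. Finally \<open>x + y = x (1 + x\<inverse>y)\<close>
  reduces selectivity to comparability of units with 1.\<close>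

locale idempotent_division_semiring =
  fixes add :: "'a \<Rightarrow> 'a \<Rightarrow> 'a" (infixl "\<oplus>" 65)
    and mul :: "'a \<Rightarrow> 'a \<Rightarrow> 'a" (infixl "\<otimes>" 70)
    and z u :: 'a
  assumes add_assoc: "(x \<oplus> y) \<oplus> w = x \<oplus> (y \<oplus> w)"
    and add_commute: "x \<oplus> y = y \<oplus> x"
    and add_zero_left: "z \<oplus> x = x"
    and mul_assoc: "(x \<otimes> y) \<otimes> w = x \<otimes> (y \<otimes> w)"
    and mul_one_left: "u \<otimes> x = x"
    and mul_one_right: "x \<otimes> u = x"
    and distrib_left: "x \<otimes> (y \<oplus> w) = x \<otimes> y \<oplus> x \<otimes> w"
    and distrib_right: "(x \<oplus> y) \<otimes> w = x \<otimes> w \<oplus> y \<otimes> w"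
    and one_add_one: "u \<oplus> u = u"
    and zero_neq_one: "z \<noteq> u"
    and nonzero_invertible: "x \<noteq> z \<Longrightarrow> \<exists>y. x \<otimes> y = u \<and> y \<otimes> x = u"
begin

abbreviation le_add (infix "\<preceq>" 50) where "a \<preceq> b \<equiv> a \<oplus> b = b"

lemma add_left_commute: "x \<oplus> (y \<oplus> w) = y \<oplus> (x \<oplus> w)"
  by (metis add_assoc add_commute)

lemma add_idem: "x \<oplus> x = x"
  by (metis distrib_left one_add_one mul_one_right)

lemma le_add_trans: "a \<preceq> b \<Longrightarrow> b \<preceq> c \<Longrightarrow> a \<preceq> c"
  by (metis add_assoc)

lemma mul_left_mono: "a \<preceq> b \<Longrightarrow> c \<otimes> a \<preceq> c \<otimes> b"
  by (metis distrib_left)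

lemma mul_right_mono: "a \<preceq> b \<Longrightarrow> a \<otimes> c \<preceq> b \<otimes> c"
  by (metis distrib_right)

lemma one_le_one_add: "u \<preceq> u \<oplus> a"
  by (simp add: add_assoc[symmetric] one_add_one)

lemma one_add_neq_zero: "u \<oplus> a \<noteq> z"
  by (metis one_le_one_add add_commute add_zero_left zero_neq_one)

lemma eq_one_if_mul_right_fixed: "p \<otimes> q = p \<Longrightarrow> p' \<otimes> p = u \<Longrightarrow> q = u"
  by (metis mul_assoc mul_one_left)

definition npow :: "'a \<Rightarrow> nat \<Rightarrow> 'a" where
  "npow a k = ((\<otimes>) a ^^ k) u"

lemma npow_0 [simp]: "npow a 0 = u"
  by (simp add: npow_def)

lemma npow_Suc: "npow a (Suc k) = a \<otimes> npow a k"
  by (simp add: npow_def)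

lemma npow_add: "npow a (i + j) = npow a i \<otimes> npow a j"
  by (induct i) (simp_all add: npow_Suc mul_one_left mul_assoc)

lemma npow_Suc_right: "npow a (Suc k) = npow a k \<otimes> a"
  using npow_add[of a k 1] by (simp add: npow_Suc mul_one_right)

lemma npow_left_inverse: "b \<otimes> a = u \<Longrightarrow> npow b k \<otimes> npow a k = u"
proof (induct k)
  case 0
  then show ?case by (simp add: mul_one_left)
next
  case (Suc k)
  have "npow b (Suc k) \<otimes> npow a (Suc k) = npow b k \<otimes> (b \<otimes> a) \<otimes> npow a k"
    unfolding npow_Suc_right[of b] npow_Suc[of a] by (simp add: mul_assoc)
  also have "\<dots> = u"
    using Suc by (simp add: mul_one_right)
  finally show ?case .
qed

lemma one_le_npow: "u \<preceq> q \<Longrightarrow> u \<preceq> npow q k"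
proof (induct k)
  case 0
  then show ?case by (simp add: one_add_one)
next
  case (Suc k)
  have "q \<otimes> u \<preceq> q \<otimes> npow q k"
    using mul_left_mono Suc by blast
  then have "q \<preceq> npow q (Suc k)"
    by (simp add: mul_one_right npow_Suc)
  then show ?case
    using le_add_trans Suc(2) by blast
qed

text \<open>The binomial expansion of \<open>(1 + a)\<^sup>k\<^sup>+\<^sup>1\<close> collapses by idempotency: all middle terms are
  absorbed, leaving \<open>(1 + a)\<^sup>k + a\<^sup>k\<^sup>+\<^sup>1\<close>.\<close>
lemma npow_one_add_Suc: "npow (u \<oplus> a) (Suc k) = npow (u \<oplus> a) k \<oplus> npow a (Suc k)"
proof (induct k)
  case 0
  then show ?case by (simp add: npow_Suc mul_one_right)
next
  case (Suc k)
  define q where "q = u \<oplus> a"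
  have IH: "npow q (Suc k) = npow q k \<oplus> npow a (Suc k)"
    using Suc q_def by simp
  have "a \<preceq> q"
    unfolding q_def by (metis add_left_commute add_idem)
  then have absorb: "a \<otimes> npow q k \<preceq> npow q (Suc k)"
    using mul_right_mono by (simp add: npow_Suc)
  have "npow q (Suc (Suc k)) = (u \<oplus> a) \<otimes> (npow q k \<oplus> npow a (Suc k))"
    using IH by (simp add: npow_Suc q_def)
  also have "\<dots> = (npow q k \<oplus> npow a (Suc k)) \<oplus> (a \<otimes> npow q k \<oplus> npow a (Suc (Suc k)))"
    by (simp add: distrib_right distrib_left mul_one_left npow_Suc add_assoc add_left_commute)
  also have "\<dots> = (a \<otimes> npow q k \<oplus> npow q (Suc k)) \<oplus> npow a (Suc (Suc k))"
    using IH by (metis add_assoc add_commute)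
  also have "\<dots> = npow q (Suc k) \<oplus> npow a (Suc (Suc k))"
    using absorb by simp
  finally show ?case
    unfolding q_def .
qed

lemma le_one_if_npow_le_one:
  assumes "m \<ge> 1" and "npow a m \<preceq> u"
  shows "a \<preceq> u"
proof -
  define q where "q = u \<oplus> a"
  obtain k where m: "m = Suc k"
    using assms(1) by (cases m) auto
  have "npow a m \<preceq> npow q k"
    using le_add_trans[OF assms(2) one_le_npow] one_le_one_add q_def by blast
  then have "npow q m = npow q k"
    using npow_one_add_Suc m q_def add_commute by metis
  then have "npow q k \<otimes> q = npow q k"
    using npow_Suc_right m by simp
  moreover obtain q' where "q \<otimes> q' = u" "q' \<otimes> q = u"
    using nonzero_invertible one_add_neq_zero q_def by blast
  ultimately have "q = u"
    using eq_one_if_mul_right_fixed npow_left_inverse by blast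
  then show ?thesis
    using q_def add_commute by metis
qed

lemma unit_comparable_one_if_npow_comparable_one:
  assumes w: "w \<otimes> w' = u" "w' \<otimes> w = u" and "m \<ge> 1"
    and "npow w m \<preceq> u \<or> u \<preceq> npow w m"
  shows "w \<preceq> u \<or> u \<preceq> w"
  using assms(4)
proof
  assume "npow w m \<preceq> u"
  then show ?thesis
    using le_one_if_npow_le_one[OF assms(3)] by blast
next
  assume "u \<preceq> npow w m"
  then have "npow w' m \<otimes> u \<preceq> npow w' m \<otimes> npow w m"
    by (rule mul_left_mono)
  then have "npow w' m \<preceq> u"
    using npow_left_inverse[OF w(2)] by (simp add: mul_one_right)
  then have "w \<otimes> w' \<preceq> w \<otimes> u"
    using le_one_if_npow_le_one[OF assms(3)] mul_left_mono by blast
  then show ?thesis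
    using w by (simp add: mul_one_right)
qed

lemma selective_if_units_comparable_one:
  assumes units: "\<And>w w'. w \<otimes> w' = u \<Longrightarrow> w' \<otimes> w = u \<Longrightarrow> w \<preceq> u \<or> u \<preceq> w"
  shows "selective (\<oplus>)"
  unfolding selective_def
proof (intro allI)
  fix x y
  show "x \<oplus> y = x \<or> x \<oplus> y = y"
  proof (cases "x = z \<or> y = z")
    case True
    then show ?thesis
      using add_zero_left add_commute by metis
  next
    case False
    then obtain x' y' where x': "x \<otimes> x' = u" "x' \<otimes> x = u" and y': "y \<otimes> y' = u" "y' \<otimes> y = u"
      using nonzero_invertible by blast
    define w where "w = x' \<otimes> y"
    have xw: "x \<otimes> w = y"
      unfolding w_def by (metis mul_assoc mul_one_left x'(1))
    have "w \<otimes> (y' \<otimes> x) = u" "(y' \<otimes> x) \<otimes> w = u"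
      unfolding w_def by (metis mul_assoc mul_one_left x' y')+
    then have "w \<preceq> u \<or> u \<preceq> w"
      by (rule units)
    moreover have "x \<oplus> y = x \<otimes> (u \<oplus> w)"
      using xw by (simp add: distrib_left mul_one_right)
    ultimately show ?thesis
      using xw add_commute by (metis mul_one_right)
  qed
qed

end

locale zmax_division_semialgebra =
  fixes add :: "'a \<Rightarrow> 'a \<Rightarrow> 'a" (infixl "\<oplus>" 65)
    and mul :: "'a \<Rightarrow> 'a \<Rightarrow> 'a" (infixl "\<otimes>" 70)
    and z u :: 'a and phi :: "zmax \<Rightarrow> 'a"
  assumes semialgebra: "division_semialgebra_zmax add mul z u phi"
begin

lemma phi_add: "phi (zmax_add a b) = phi a \<oplus> phi b"
  and phi_zero: "phi NegInf = z"
  and phi_one: "phi (Fin 0) = u"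
  and phi_inj: "inj phi"
  using semialgebra unfolding division_semialgebra_zmax_def zmax_zero_def zmax_one_def by auto

sublocale idempotent_division_semiring
proof -
  have "semiring_ax (\<oplus>) (\<otimes>) z u" and "\<forall>x. x \<noteq> z \<longrightarrow> x \<in> units_of_sr (\<otimes>) u"
    using semialgebra unfolding division_semialgebra_zmax_def division_semiring_def by auto
  moreover have "u \<oplus> u = u"
    using phi_add[of "Fin 0" "Fin 0"] phi_one by simp
  moreover have "z \<noteq> u"
    using phi_inj phi_zero phi_one by (metis injD zmax.distinct(1))
  ultimately show "idempotent_division_semiring (\<oplus>) (\<otimes>) z u"
    unfolding semiring_ax_def units_of_sr_def by unfold_locales auto
qed

lemma scalar_comparable_one: "phi (Fin n) \<preceq> u \<or> u \<preceq> phi (Fin n)"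
  using phi_add[of "Fin n" "Fin 0"] phi_add[of "Fin 0" "Fin n"] phi_one
  by (cases "n \<le> 0") (simp_all add: max_def)

lemma unit_npow_scalar_if_finite_unit_index:
  assumes "finite_unit_index (\<otimes>) u phi" and w: "w \<otimes> w' = u" "w' \<otimes> w = u"
  shows "\<exists>m\<ge>1. \<exists>n. npow w m = phi (Fin n)"
proof -
  define coset where "coset k = (\<lambda>c. npow w k \<otimes> phi c) ` {c. c \<noteq> zmax_zero}" for k
  have "range coset \<subseteq> unit_cosets (\<otimes>) u phi"
    unfolding coset_def unit_cosets_def units_of_sr_def using npow_left_inverse w by blast
  then have "\<not> inj coset"
    using assms(1) finite_subset finite_imageD unfolding finite_unit_index_def by blast
  then obtain i j where ij: "i < j" "coset i = coset j"
    unfolding inj_def by (metis linorder_neqE_nat)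
  have "npow w j \<in> coset j"
    unfolding coset_def zmax_zero_def using phi_one mul_one_right
    by (metis (mono_tags, lifting) image_eqI mem_Collect_eq zmax.distinct(1))
  then obtain c where "c \<noteq> NegInf" and c: "npow w j = npow w i \<otimes> phi c"
    using ij(2) unfolding coset_def zmax_zero_def by auto
  then obtain n where n: "c = Fin n"
    by (cases c) auto
  define m where "m = j - i"
  have "npow w i \<otimes> npow w m = npow w i \<otimes> phi (Fin n)"
    using npow_add[of w i m] c n ij(1) m_def by simp
  then have "npow w' i \<otimes> npow w i \<otimes> npow w m = npow w' i \<otimes> npow w i \<otimes> phi (Fin n)"
    by (simp add: mul_assoc)
  then have "npow w m = phi (Fin n)"
    using npow_left_inverse[OF w(2), of i] by (simp add: mul_one_left)
  moreover have "m \<ge> 1"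
    using ij(1) m_def by simp
  ultimately show ?thesis
    by blast
qed

end

theorem mainTheorem15:
  fixes add mul :: "'a \<Rightarrow> 'a \<Rightarrow> 'a" and z u :: 'a and phi :: "zmax \<Rightarrow> 'a"
  assumes "division_semialgebra_zmax add mul z u phi"
    and "finite_unit_index mul u phi"
  shows "selective add"
proof -
  interpret zmax_division_semialgebra add mul z u phi
    using assms(1) by unfold_locales
  show ?thesis
  proof (rule selective_if_units_comparable_one)
    fix w w' assume w: "mul w w' = u" "mul w' w = u"
    then obtain m n where "m \<ge> 1" "npow w m = phi (Fin n)"
      using unit_npow_scalar_if_finite_unit_index[OF assms(2)] by blast
    then show "add w u = u \<or> add u w = w"
      using unit_comparable_one_if_npow_comparable_one[OF w] scalar_comparable_one by metis
  qed
qed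

end
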